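(* Let $F$ be a $2$-edge-coloured graph on $n \geq 2$ vertices such that $d^R(v) \geq \log_2 n$ and $d^B(v) \geq \log_2 n$ for every vertex $v \in V(F)$. Then $F$ contains an alternating cycle.
   Context: A $2$-edge-coloured graph is a finite simple graph each of whose edges is coloured red or blue. For a vertex $v$, $d^R(v)$ (resp. $d^B(v)$) is the number of red (resp. blue) edges incident to $v$. An alternating cycle is a cycle (in the graph-theoretic sense, with distinct vertices) whose consecutive edges have alternating colours. *)

theory Defs
  imports Main "HOL-Library.Log_Nat" Complex_Main
begin

definition two_coloured_graph :: "'a set \<Rightarrow> ('a \<Rightarrow> 'a \<Rightarrow> bool) \<Rightarrow> ('a \<Rightarrow> 'a \<Rightarrow> bool) \<Rightarrow> bool" where
  "two_coloured_graph V Rd Bl \<longleftrightarrow> finite V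
     \<and> (\<forall>u v. Rd u v \<longrightarrow> u \<in> V \<and> v \<in> V \<and> u \<noteq> v \<and> Rd v u)
     \<and> (\<forall>u v. Bl u v \<longrightarrow> u \<in> V \<and> v \<in> V \<and> u \<noteq> v \<and> Bl v u)
     \<and> (\<forall>u v. \<not> (Rd u v \<and> Bl u v))"

definition red_deg :: "'a set \<Rightarrow> ('a \<Rightarrow> 'a \<Rightarrow> bool) \<Rightarrow> 'a \<Rightarrow> nat" where
  "red_deg V Rd v = card {u \<in> V. Rd v u}"

definition blue_deg :: "'a set \<Rightarrow> ('a \<Rightarrow> 'a \<Rightarrow> bool) \<Rightarrow> 'a \<Rightarrow> nat" where
  "blue_deg V Bl v = card {u \<in> V. Bl v u}"

definition alternating_cycle :: "('a \<Rightarrow> 'a \<Rightarrow> bool) \<Rightarrow> ('a \<Rightarrow> 'a \<Rightarrow> bool) \<Rightarrow> 'a list \<Rightarrow> bool" where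
  "alternating_cycle Rd Bl c \<longleftrightarrow> length c \<ge> 3 \<and> distinct c
     \<and> (\<forall>i < length c. Rd (c!i) (c!((i+1) mod length c)) \<or> Bl (c!i) (c!((i+1) mod length c)))
     \<and> (\<forall>i < length c.
          Rd (c!i) (c!((i+1) mod length c)) \<longleftrightarrow>
          Bl (c!((i+1) mod length c)) (c!((i+2) mod length c)))"

end

theory Submission
  imports Defs
begin

text \<open>A two-coloured graph without alternating cycles has a cut vertex \<open>z\<close> and two
  disjoint nonempty vertex sets, avoiding \<open>z\<close>, from which every edge leads back into the set
  or to \<open>z\<close>. Inside such a set each vertex loses at most one neighbour of each colour, so
  induction on \<open>d\<close> shows that minimum red and blue degree \<open>d\<close> without alternating cycles forces
  at least \<open>2 ^ (d + 1) - 1\<close> vertices, which is incompatible with \<open>d \<ge> log\<^sub>2 n\<close>.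

  The cut vertex comes from Kotzig's theorem, applied to the graph with one copy of \<open>V\<close> per
  colour, where each vertex is matched to its copy: an alternating cycle there is an alternating
  cycle of the coloured graph, and a bridge in the matching yields the cut vertex. Kotzig's
  theorem itself is proved by induction on the number of vertices, contracting a blossom found
  on a shortest alternating walk from a vertex to its mate.\<close>

lemma successively_take: "successively P xs \<Longrightarrow> successively P (take n xs)"
  by (auto simp add: successively_conv_nth)

lemma successively_drop: "successively P xs \<Longrightarrow> successively P (drop n xs)"
  by (auto simp add: successively_conv_nth)

lemma not_successively_split:
  "\<not> successively P xs \<Longrightarrow> \<exists>as a b bs. xs = as @ a # b # bs \<and> \<not> P a b"
proof (induction xs)
  case (Cons x xs)
  show ?case
  proof (cases xs)
    case (Cons y ys)
    show ?thesis
    proof (cases "P x y")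
      case True
      then obtain as a b bs where "xs = as @ a # b # bs" "\<not> P a b"
        using Cons.IH Cons.prems \<open>xs = y # ys\<close> by auto
      then show ?thesis by (intro exI[of _ "x # as"]) auto
    next
      case False
      then show ?thesis using \<open>xs = y # ys\<close> by (intro exI[of _ "[]"]) auto
    qed
  qed (use Cons.prems in simp)
qed simp

lemma successively_cyclic_nth:
  assumes "successively P xs" "P (last xs) (hd xs)" "i < length xs"
  shows "P (xs ! i) (xs ! (Suc i mod length xs))"
proof (cases "Suc i < length xs")
  case True
  then show ?thesis using assms(1) successively_nth by fastforce
next
  case False
  then have "i = length xs - 1" "xs \<noteq> []" using assms(3) by auto
  then show ?thesis using assms(2) by (simp add: last_conv_nth hd_conv_nth)
qed

lemma last_take_Suc_conv_nth: "i < length xs \<Longrightarrow> last (take (Suc i) xs) = xs ! i"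
  by (simp add: take_Suc_conv_app_nth)

lemma successively_distinct_avoid_ends:
  assumes "successively P xs" "distinct xs"
  shows "successively (\<lambda>u v. P u v \<and> u \<noteq> last xs \<and> v \<noteq> hd xs) xs"
  unfolding successively_conv_nth
proof (intro allI impI conjI)
  fix i assume i: "Suc i < length xs"
  then have "xs \<noteq> []" by auto
  with i assms show "P (xs ! i) (xs ! Suc i)" "xs ! i \<noteq> last xs" "xs ! Suc i \<noteq> hd xs"
    by (auto simp: successively_nth last_conv_nth hd_conv_nth nth_eq_iff_index_eq)
qed

section \<open>Alternating cycles with respect to a perfect matching\<close>

definition matched_graph :: "'b set \<Rightarrow> ('b \<Rightarrow> 'b \<Rightarrow> bool) \<Rightarrow> ('b \<Rightarrow> 'b) \<Rightarrow> bool" where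
  "matched_graph W E m \<longleftrightarrow> finite W \<and> (\<forall>x y. E x y \<longrightarrow> x \<in> W \<and> y \<in> W \<and> x \<noteq> y \<and> E y x)
     \<and> (\<forall>x\<in>W. m x \<in> W \<and> m x \<noteq> x \<and> m (m x) = x \<and> E x (m x))"

definition mate_free :: "('b \<Rightarrow> 'b) \<Rightarrow> 'b list \<Rightarrow> bool" where
  "mate_free m xs \<longleftrightarrow> distinct xs \<and> (\<forall>x\<in>set xs. m x \<notin> set xs)"

text \<open>A list \<open>x\<^sub>0, x\<^sub>1, \<dots>\<close> of consecutive \<open>alt_step\<close>s stands for the alternating walk
  \<open>x\<^sub>0, m x\<^sub>0, x\<^sub>1, m x\<^sub>1, \<dots>\<close>; mate-freeness makes it a path. The condition \<open>y \<noteq> x\<close>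
  forbids turning back along the matching edge.\<close>

definition alt_step :: "('b \<Rightarrow> 'b \<Rightarrow> bool) \<Rightarrow> ('b \<Rightarrow> 'b) \<Rightarrow> 'b \<Rightarrow> 'b \<Rightarrow> bool" where
  "alt_step E m x y \<longleftrightarrow> E (m x) y \<and> y \<noteq> x"

definition alt_cycle :: "'b set \<Rightarrow> ('b \<Rightarrow> 'b \<Rightarrow> bool) \<Rightarrow> ('b \<Rightarrow> 'b) \<Rightarrow> 'b list \<Rightarrow> bool" where
  "alt_cycle W E m xs \<longleftrightarrow> 2 \<le> length xs \<and> set xs \<subseteq> W \<and> mate_free m xs \<and>
     successively (alt_step E m) xs \<and> alt_step E m (last xs) (hd xs)"

definition matching_bridge :: "'b set \<Rightarrow> ('b \<Rightarrow> 'b \<Rightarrow> bool) \<Rightarrow> ('b \<Rightarrow> 'b) \<Rightarrow> 'b \<Rightarrow> 'b set \<Rightarrow> bool" where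
  "matching_bridge W E m x X \<longleftrightarrow> x \<in> X \<and> m x \<notin> X \<and> X \<subseteq> W \<and>
     (\<forall>a\<in>X. \<forall>b. E a b \<longrightarrow> b \<in> X \<or> (a = x \<and> b = m x))"

lemma matched_graph_edgeD:
  "matched_graph W E m \<Longrightarrow> E x y \<Longrightarrow> x \<in> W \<and> y \<in> W \<and> x \<noteq> y \<and> E y x"
  unfolding matched_graph_def by blast

lemma matched_graph_mateD:
  "matched_graph W E m \<Longrightarrow> x \<in> W \<Longrightarrow> m x \<in> W \<and> m x \<noteq> x \<and> m (m x) = x \<and> E x (m x)"
  unfolding matched_graph_def by blast

lemma mate_free_take: "mate_free m xs \<Longrightarrow> mate_free m (take i xs)"
  unfolding mate_free_def using set_take_subset by fastforce

lemma mate_free_drop: "mate_free m xs \<Longrightarrow> mate_free m (drop i xs)"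
  unfolding mate_free_def using set_drop_subset by fastforce

lemma mate_free_rev_map:
  assumes G: "matched_graph W E m" and "set xs \<subseteq> W" "mate_free m xs"
  shows "mate_free m (rev (map m xs))"
proof -
  have inv: "\<And>x. x \<in> set xs \<Longrightarrow> m (m x) = x"
    using assms(2) matched_graph_mateD[OF G] by blast
  then have "inj_on m (set xs)" by (metis inj_on_inverseI)
  with assms(3) inv show ?thesis
    unfolding mate_free_def by (auto simp: distinct_map)
qed

lemma mate_free_append:
  assumes G: "matched_graph W E m" and "mate_free m ys" "set ys \<subseteq> W - S"
    and "mate_free m zs" "set zs \<subseteq> S" and S_mates: "\<forall>s\<in>S. m s \<in> S"
  shows "mate_free m (ys @ zs)"
proof -
  have "m y \<notin> S" if "y \<in> set ys" for y
    using that assms(3) S_mates matched_graph_mateD[OF G] by fastforce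
  with assms show ?thesis unfolding mate_free_def by auto
qed

text \<open>The walk \<open>x\<^sub>0, m x\<^sub>0, \<dots>, x\<^sub>k, m x\<^sub>k\<close> read backwards.\<close>

lemma alt_path_rev_map:
  assumes G: "matched_graph W E m" and "set xs \<subseteq> W" "successively (alt_step E m) xs"
  shows "successively (alt_step E m) (rev (map m xs))"
proof -
  have "successively (\<lambda>x y. alt_step E m (m y) (m x)) xs"
    using assms(3)
  proof (rule successively_mono)
    fix x y assume "x \<in> set xs" "y \<in> set xs" "alt_step E m x y"
    then show "alt_step E m (m y) (m x)"
      using assms(2) matched_graph_edgeD[OF G] matched_graph_mateD[OF G]
      unfolding alt_step_def by (metis subsetD)
  qed
  then show ?thesis by (simp add: successively_map)
qed

lemma alt_cycle_rotate:
  assumes "alt_cycle W E m (as @ a # b # bs)"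
  shows "alt_cycle W E m (b # bs @ as @ [a])"
proof -
  let ?P = "alt_step E m"
  have "successively ?P (as @ [a])" "successively ?P (b # bs)" "?P a b"
    using assms by (simp_all add: alt_cycle_def successively_append_iff)
  moreover have "?P (last (b # bs)) (hd (as @ [a]))"
    using assms by (cases as) (simp_all add: alt_cycle_def)
  ultimately have "successively ?P ((b # bs) @ (as @ [a]))"
    by (subst successively_append_iff) simp
  with \<open>?P a b\<close> show ?thesis
    using assms by (auto simp: alt_cycle_def mate_free_def successively_append_iff)
qed

lemma alt_cycle_drop:
  assumes "set ps \<subseteq> W" "mate_free m ps" "successively (alt_step E m) ps"
    and "i < length ps" "alt_step E m (last ps) (ps ! i)"
  shows "alt_cycle W E m (drop i ps)"
proof -
  have "ps \<noteq> []" using assms(4) by auto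
  then have "i \<noteq> length ps - 1"
    using assms(5) by (auto simp: alt_step_def last_conv_nth)
  then have "2 \<le> length (drop i ps)" using assms(4) by simp
  then show ?thesis
    using assms set_drop_subset[of i ps]
    by (auto simp: alt_cycle_def mate_free_drop successively_drop hd_drop_conv_nth)
qed

subsection \<open>Blossoms\<close>

definition alt_walk_to_mate :: "'b set \<Rightarrow> ('b \<Rightarrow> 'b \<Rightarrow> bool) \<Rightarrow> ('b \<Rightarrow> 'b) \<Rightarrow> 'b list \<Rightarrow> bool" where
  "alt_walk_to_mate W E m qs \<longleftrightarrow>
     qs \<noteq> [] \<and> set qs \<subseteq> W \<and> last qs = m (hd qs) \<and> successively (alt_step E m) qs"

text \<open>Extending a longest mate-free alternating path by one more step either closes an
  alternating cycle or reaches the mate of a vertex on the path.\<close>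

lemma alt_walk_to_mate_exists:
  assumes G: "matched_graph W E m" and "W \<noteq> {}" and no_cycle: "\<nexists>xs. alt_cycle W E m xs"
    and out: "\<forall>x\<in>W. \<exists>y. alt_step E m x y"
  shows "\<exists>qs. alt_walk_to_mate W E m qs"
proof -
  define P where
    "P ps \<longleftrightarrow> ps \<noteq> [] \<and> set ps \<subseteq> W \<and> mate_free m ps \<and> successively (alt_step E m) ps" for ps
  obtain w where w: "w \<in> W" using assms(2) by auto
  have "P [w]" using matched_graph_mateD[OF G w] w by (simp add: P_def mate_free_def)
  moreover have "length ps < card W + 1" if "P ps" for ps
  proof -
    have "length ps = card (set ps)" using that by (simp add: P_def mate_free_def distinct_card)
    also have "\<dots> \<le> card W"
      using that G by (intro card_mono) (auto simp: P_def matched_graph_def)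
    finally show ?thesis by simp
  qed
  ultimately obtain ps where ps: "P ps" and longest: "\<And>qs. P qs \<Longrightarrow> length qs \<le> length ps"
    using ex_has_greatest_nat[of P "[w]" length "card W + 1"] by blast
  then have ne: "ps \<noteq> []" and ps_W: "set ps \<subseteq> W" and mf: "mate_free m ps"
    and path: "successively (alt_step E m) ps" by (auto simp: P_def)
  have "last ps \<in> W" using ne ps_W by auto
  then obtain y where step: "alt_step E m (last ps) y" using out by blast
  have y_W: "y \<in> W"
    using step matched_graph_edgeD[OF G] unfolding alt_step_def by blast
  have "y \<notin> set ps"
  proof
    assume "y \<in> set ps"
    then obtain i where "i < length ps" "ps ! i = y" by (auto simp: in_set_conv_nth)
    then show False
      using alt_cycle_drop[OF ps_W mf path] step no_cycle by blast
  qed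
  show ?thesis
  proof (cases "y \<in> m ` set ps")
    case True
    then obtain i where i: "i < length ps" "y = m (ps ! i)" by (auto simp: in_set_conv_nth)
    define qs where "qs = drop i ps @ [y]"
    have "alt_walk_to_mate W E m qs"
      using i ne ps_W y_W step set_drop_subset[of i ps] successively_drop[OF path, of i]
      by (auto simp: alt_walk_to_mate_def qs_def successively_append_iff hd_drop_conv_nth)
    then show ?thesis by blast
  next
    case False
    have "m y \<notin> set ps"
      using False matched_graph_mateD[OF G y_W] by (metis imageI)
    then have "P (ps @ [y])"
      using ps \<open>y \<notin> set ps\<close> False y_W step ne matched_graph_mateD[OF G y_W]
      by (auto simp: P_def mate_free_def successively_append_iff)
    then show ?thesis using longest by fastforce
  qed
qed

lemma alt_walk_to_mate_length:
  assumes G: "matched_graph W E m" and walk: "alt_walk_to_mate W E m qs"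
  shows "3 \<le> length qs"
proof (rule ccontr)
  assume "\<not> 3 \<le> length qs"
  moreover have "qs \<noteq> []" "hd qs \<in> W" using walk by (auto simp: alt_walk_to_mate_def)
  ultimately consider a where "qs = [a]" | a b where "qs = [a, b]"
    by (cases qs; cases "tl qs"; cases "tl (tl qs)") auto
  then show False
  proof cases
    case 1
    then show False using walk matched_graph_mateD[OF G \<open>hd qs \<in> W\<close>]
      by (simp add: alt_walk_to_mate_def)
  next
    case 2
    then show False using walk matched_graph_mateD[OF G \<open>hd qs \<in> W\<close>] matched_graph_edgeD[OF G]
      by (auto simp: alt_walk_to_mate_def alt_step_def)
  qed
qed

lemma alt_walk_to_mate_shortcut:
  assumes walk: "alt_walk_to_mate W E m qs"
    and ij: "i < j" "Suc j < length qs" "qs ! i = qs ! j"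
  shows "alt_walk_to_mate W E m (take (Suc i) qs @ drop (Suc j) qs)"
proof -
  have path: "successively (alt_step E m) qs" using walk by (simp add: alt_walk_to_mate_def)
  have "last (take (Suc i) qs) = qs ! j" using ij by (simp add: last_take_Suc_conv_nth)
  moreover have "alt_step E m (qs ! j) (qs ! Suc j)" using path ij successively_nth by blast
  ultimately have "successively (alt_step E m) (take (Suc i) qs @ drop (Suc j) qs)"
    using ij by (simp add: successively_append_iff successively_take successively_drop[OF path]
        successively_take[OF path] hd_drop_conv_nth)
  moreover have "set (take (Suc i) qs @ drop (Suc j) qs) \<subseteq> set qs"
    using set_take_subset set_drop_subset by fastforce
  moreover have "drop (Suc j) qs \<noteq> []" using ij by simp
  moreover have "hd (take (Suc i) qs @ drop (Suc j) qs) = hd qs" by (cases qs) simp_all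
  ultimately show ?thesis
    using walk by (auto simp: alt_walk_to_mate_def)
qed

lemma alt_walk_to_mate_infix:
  assumes "set qs \<subseteq> W" "successively (alt_step E m) qs"
    and ab: "a < b" "b < length qs" "qs ! b = m (qs ! a)"
  shows "alt_walk_to_mate W E m (drop a (take (Suc b) qs))"
proof -
  have "set (drop a (take (Suc b) qs)) \<subseteq> set qs"
    by (meson order_trans set_drop_subset set_take_subset)
  then show ?thesis
    using assms successively_drop[OF successively_take[OF assms(2)]]
    by (auto simp: alt_walk_to_mate_def hd_drop_conv_nth last_take_Suc_conv_nth)
qed

lemma shortest_alt_walk_to_mate_mate_free:
  assumes G: "matched_graph W E m" and walk: "alt_walk_to_mate W E m qs"
    and shortest: "\<And>qs'. alt_walk_to_mate W E m qs' \<Longrightarrow> length qs \<le> length qs'"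
  shows "mate_free m (butlast qs)"
proof -
  define ps where "ps = butlast qs"
  have qs_W: "set qs \<subseteq> W" and path: "successively (alt_step E m) qs"
    using walk by (auto simp: alt_walk_to_mate_def)
  have len: "length ps < length qs" and nth: "\<And>i. i < length ps \<Longrightarrow> ps ! i = qs ! i"
    using walk by (auto simp: ps_def alt_walk_to_mate_def nth_butlast)
  have "distinct ps"
  proof (rule ccontr)
    assume "\<not> distinct ps"
    then obtain i j where "i < j" "j < length ps" "ps ! i = ps ! j"
      by (metis distinct_conv_nth linorder_neqE_nat)
    then show False
      using alt_walk_to_mate_shortcut[OF walk, of i j] shortest[of "take (Suc i) qs @ drop (Suc j) qs"]
        len nth by (simp add: ps_def)
  qed
  moreover have "m x \<notin> set ps" if x: "x \<in> set ps" for x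
  proof
    assume "m x \<in> set ps"
    then obtain i j where ij: "i < length ps" "j < length ps" "ps ! i = x" "ps ! j = m x"
      using x by (auto simp: in_set_conv_nth)
    have "x \<in> W" using x qs_W by (auto simp: ps_def dest: in_set_butlastD)
    then have "i \<noteq> j" "ps ! i = m (ps ! j)"
      using ij matched_graph_mateD[OF G \<open>x \<in> W\<close>] by auto
    then obtain a b where "a < b" "b < length ps" "ps ! b = m (ps ! a)"
      using ij by (metis linorder_neqE_nat)
    then show False
      using alt_walk_to_mate_infix[OF qs_W path, of a b] shortest[of "drop a (take (Suc b) qs)"]
        len nth by simp
  qed
  ultimately show ?thesis by (simp add: mate_free_def ps_def)
qed

text \<open>In \<open>blossom_exists\<close>, \<open>S\<close> consists of the inner vertices of a shortest alternating walk
  from \<open>p\<close> to \<open>m p\<close> and their mates. It plays the role of a blossom with base \<open>p\<close> in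
  Edmonds' algorithm.\<close>

definition blossom :: "'b set \<Rightarrow> ('b \<Rightarrow> 'b \<Rightarrow> bool) \<Rightarrow> ('b \<Rightarrow> 'b) \<Rightarrow> 'b \<Rightarrow> 'b set \<Rightarrow> bool" where
  "blossom W E m p S \<longleftrightarrow> p \<in> W \<and> S \<subseteq> W \<and> S \<noteq> {} \<and> p \<notin> S \<and> m p \<notin> S \<and> (\<forall>s\<in>S. m s \<in> S) \<and>
     (\<forall>s\<in>S. \<exists>ys. ys \<noteq> [] \<and> hd ys = s \<and> set ys \<subseteq> S \<and> mate_free m ys \<and>
        successively (alt_step E m) (ys @ [m p]))"

lemma blossom_of_alt_walk:
  assumes G: "matched_graph W E m" and path: "successively (alt_step E m) (p # T @ [m p])"
    and W: "set (p # T) \<subseteq> W" and mf: "mate_free m (p # T)" and "T \<noteq> []"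
  shows "blossom W E m p (set T \<union> m ` set T)"
proof -
  define S where "S = set T \<union> m ` set T"
  have inv: "\<And>x. x \<in> W \<Longrightarrow> m (m x) = x" using matched_graph_mateD[OF G] by blast
  have p_W: "p \<in> W" and T_W: "set T \<subseteq> W" using W by auto
  have mf_T: "mate_free m T" using mf by (simp add: mate_free_def)
  have "p \<notin> S" "m p \<notin> S"
    using mf inv p_W T_W unfolding mate_free_def S_def by (auto, metis subsetD)
  moreover have "S \<subseteq> W" "\<forall>s\<in>S. m s \<in> S"
    using T_W inv matched_graph_mateD[OF G] by (auto simp: S_def)
  moreover have "\<exists>ys. ys \<noteq> [] \<and> hd ys = s \<and> set ys \<subseteq> S \<and> mate_free m ys \<and>
      successively (alt_step E m) (ys @ [m p])" if s: "s \<in> S" for s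
  proof (cases "s \<in> set T")
    case True
    then obtain k where k: "k < length T" "T ! k = s" by (auto simp: in_set_conv_nth)
    have "drop k T @ [m p] = drop (Suc k) (p # T @ [m p])" using k by simp
    then have "successively (alt_step E m) (drop k T @ [m p])"
      by (metis path successively_drop)
    then show ?thesis
      using k mf_T set_drop_subset[of k T]
      by (intro exI[of _ "drop k T"]) (auto simp: S_def hd_drop_conv_nth mate_free_drop)
  next
    case False
    then obtain k where k: "k < length T" "s = m (T ! k)"
      using s by (auto simp: S_def in_set_conv_nth)
    define L where "L = take (Suc k) T"
    have "rev (map m L) @ [m p] = rev (map m (take (Suc (Suc k)) (p # T @ [m p])))"
      using k by (simp add: L_def)
    moreover have "set (take (Suc (Suc k)) (p # T @ [m p])) \<subseteq> W"
      using k W by (auto dest: in_set_takeD)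
    ultimately have "successively (alt_step E m) (rev (map m L) @ [m p])"
      using alt_path_rev_map[OF G _ successively_take[OF path]] by metis
    moreover have "mate_free m (rev (map m L))"
      using mate_free_rev_map[OF G _ mate_free_take[OF mf_T]] T_W set_take_subset
      by (metis L_def order_trans)
    ultimately show ?thesis
      using k set_take_subset[of "Suc k" T]
      by (intro exI[of _ "rev (map m L)"])
        (auto simp: S_def L_def hd_rev take_Suc_conv_app_nth)
  qed
  ultimately show ?thesis
    using \<open>T \<noteq> []\<close> p_W unfolding blossom_def S_def by auto
qed

lemma blossom_exists:
  assumes G: "matched_graph W E m" and "W \<noteq> {}" and "\<nexists>xs. alt_cycle W E m xs"
    and "\<forall>x\<in>W. \<exists>y. alt_step E m x y"
  shows "\<exists>p S. blossom W E m p S"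
proof -
  obtain qs0 where "alt_walk_to_mate W E m qs0" using alt_walk_to_mate_exists[OF assms] by blast
  then obtain qs where walk: "alt_walk_to_mate W E m qs"
    and shortest: "\<And>qs'. alt_walk_to_mate W E m qs' \<Longrightarrow> length qs \<le> length qs'"
    using ex_has_least_nat[of "alt_walk_to_mate W E m" qs0 length] by blast
  define p where "p = hd qs"
  define T where "T = butlast (tl qs)"
  have "3 \<le> length qs" using alt_walk_to_mate_length[OF G walk] .
  then have "tl qs \<noteq> []" "T \<noteq> []" by (simp_all add: T_def flip: length_greater_0_conv)
  then have "qs = p # T @ [last (tl qs)]" by (cases qs) (simp_all add: p_def T_def)
  moreover have "last (tl qs) = m p"
    using walk \<open>tl qs \<noteq> []\<close> by (simp add: alt_walk_to_mate_def last_tl p_def)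
  ultimately have qs: "qs = p # T @ [m p]" by simp
  have "mate_free m (p # T)"
    using shortest_alt_walk_to_mate_mate_free[OF G walk shortest] qs by (simp add: butlast_append)
  moreover have "set (p # T) \<subseteq> W" using walk qs by (auto simp: alt_walk_to_mate_def)
  ultimately show ?thesis
    using blossom_of_alt_walk[OF G _ _ _ \<open>T \<noteq> []\<close>] walk qs
    by (auto simp: alt_walk_to_mate_def)
qed

text \<open>An edge from the base \<open>p\<close> into the blossom would close an alternating cycle through
  \<open>m p\<close>.\<close>

lemma blossom_base_no_edge:
  assumes G: "matched_graph W E m" and B: "blossom W E m p S"
    and no_cycle: "\<nexists>xs. alt_cycle W E m xs" and s: "s \<in> S"
  shows "\<not> E p s"
proof
  assume e: "E p s"
  obtain ys where ys: "ys \<noteq> []" "hd ys = s" "set ys \<subseteq> S" "mate_free m ys"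
    "successively (alt_step E m) (ys @ [m p])" using B s unfolding blossom_def by blast
  have p: "p \<in> W" "p \<notin> S" "m p \<notin> S" "S \<subseteq> W" "\<forall>s\<in>S. m s \<in> S"
    using B by (auto simp: blossom_def)
  have "m y \<noteq> m p" if "y \<in> set ys" for y
  proof -
    have "y \<in> S" using that ys(3) by blast
    then show ?thesis using p matched_graph_mateD[OF G p(1)] matched_graph_mateD[OF G, of y] by auto
  qed
  then have "mate_free m (m p # ys)"
    using ys p matched_graph_mateD[OF G p(1)] unfolding mate_free_def by auto
  moreover have "alt_step E m (m p) s" using e p matched_graph_mateD[OF G p(1)] s
    by (auto simp: alt_step_def)
  moreover have "successively (alt_step E m) ys" "alt_step E m (last ys) (m p)"
    using ys(1,5) by (simp_all add: successively_append_iff)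
  ultimately have "alt_cycle W E m (m p # ys)"
    using ys p matched_graph_mateD[OF G p(1)]
    by (auto simp: alt_cycle_def successively_Cons Suc_le_eq)
  then show False using no_cycle by blast
qed

subsection \<open>Contracting a blossom\<close>

definition contract :: "('b \<Rightarrow> 'b \<Rightarrow> bool) \<Rightarrow> 'b set \<Rightarrow> 'b \<Rightarrow> 'b \<Rightarrow> 'b \<Rightarrow> bool" where
  "contract E S c x y \<longleftrightarrow> x \<notin> S \<and> y \<notin> S \<and>
     (E x y \<or> (x = c \<and> y \<noteq> c \<and> (\<exists>s\<in>S. E s y)) \<or> (y = c \<and> x \<noteq> c \<and> (\<exists>s\<in>S. E s x)))"

lemma matched_graph_contract:
  assumes G: "matched_graph W E m" and B: "blossom W E m p S"
  shows "matched_graph (W - S) (contract E S (m p)) m"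
proof -
  have mp_W: "m p \<in> W" using B matched_graph_mateD[OF G] by (simp add: blossom_def)
  have "x \<in> W - S \<and> y \<in> W - S \<and> x \<noteq> y \<and> contract E S (m p) y x"
    if "contract E S (m p) x y" for x y
    using that mp_W matched_graph_edgeD[OF G] unfolding contract_def by blast
  moreover have "m x \<in> W - S \<and> m x \<noteq> x \<and> m (m x) = x \<and> contract E S (m p) x (m x)"
    if x: "x \<in> W - S" for x
  proof -
    have "m x \<notin> S" using x B matched_graph_mateD[OF G] by (metis Diff_iff blossom_def)
    then show ?thesis using x matched_graph_mateD[OF G, of x] by (auto simp: contract_def)
  qed
  ultimately show ?thesis using G by (simp add: matched_graph_def)
qed

lemma contract_alt_step_cases:
  assumes "alt_step (contract E S c) m a b" "\<not> alt_step E m a b"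
  shows "(m a = c \<and> (\<exists>s\<in>S. E s b)) \<or> (b = c \<and> (\<exists>s\<in>S. E s (m a)))"
  using assms by (auto simp: alt_step_def contract_def)

text \<open>The contracted vertex \<open>m p\<close> or its mate \<open>p\<close> occurs at most once on a cycle, so only
  the step into \<open>m p\<close> or out of \<open>p\<close> can use a contracted edge.\<close>

lemma contract_alt_cycle_path:
  assumes G: "matched_graph W E m"
    and cyc: "alt_cycle (W - S) (contract E S c) m ys"
    and closing: "\<not> alt_step E m (last ys) (hd ys)"
  shows "successively (alt_step E m) ys"
proof -
  define a where "a = last ys"
  define b where "b = hd ys"
  have ys_W: "set ys \<subseteq> W - S" and mf: "mate_free m ys"
    and path: "successively (alt_step (contract E S c) m) ys"
    and ab: "alt_step (contract E S c) m a b"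
    using cyc by (auto simp: alt_cycle_def a_def b_def)
  have "ys \<noteq> []" using cyc by (auto simp: alt_cycle_def)
  then have a_ys: "a \<in> set ys" and b_ys: "b \<in> set ys" by (simp_all add: a_def b_def)
  have cases: "(m a = c \<and> (\<exists>s\<in>S. E s b)) \<or> (b = c \<and> (\<exists>s\<in>S. E s (m a)))"
    using contract_alt_step_cases[OF ab] closing by (simp add: a_def b_def)
  have "successively (\<lambda>u v. alt_step (contract E S c) m u v \<and> u \<noteq> a \<and> v \<noteq> b) ys"
    using successively_distinct_avoid_ends[OF path] mf by (simp add: mate_free_def a_def b_def)
  then show ?thesis
  proof (rule successively_mono)
    fix u v assume uv: "u \<in> set ys" "v \<in> set ys"
      and step: "alt_step (contract E S c) m u v \<and> u \<noteq> a \<and> v \<noteq> b"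
    have "u \<in> W" "a \<in> W" using uv(1) a_ys ys_W by auto
    then have "m u \<noteq> m a" using step matched_graph_mateD[OF G] by metis
    then have "m u \<noteq> c \<and> v \<noteq> c"
      using cases uv step mf a_ys b_ys unfolding mate_free_def by metis
    then show "alt_step E m u v"
      using step contract_alt_step_cases[of E S c m u v] by auto
  qed
qed

text \<open>The single step using a contracted edge becomes the closing step after rotating, and it
  is replaced by a detour through the blossom.\<close>

lemma contract_alt_cycle_lift_closing:
  assumes G: "matched_graph W E m" and B: "blossom W E m p S"
    and cyc: "alt_cycle (W - S) (contract E S (m p)) m ys"
    and closing: "\<not> alt_step E m (last ys) (hd ys)"
  shows "\<exists>zs. alt_cycle W E m zs"
proof -
  define a where "a = last ys"
  define b where "b = hd ys"
  have inv: "\<And>x. x \<in> W \<Longrightarrow> m (m x) = x" using matched_graph_mateD[OF G] by blast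
  have p: "p \<in> W" "S \<subseteq> W" "\<forall>s\<in>S. m s \<in> S" using B by (auto simp: blossom_def)
  have segs: "\<And>s. s \<in> S \<Longrightarrow> \<exists>ys. ys \<noteq> [] \<and> hd ys = s \<and> set ys \<subseteq> S \<and> mate_free m ys \<and>
      successively (alt_step E m) (ys @ [m p])" using B by (simp add: blossom_def)
  have len: "2 \<le> length ys" and ys_W: "set ys \<subseteq> W - S" and mf: "mate_free m ys"
    and ab: "alt_step (contract E S (m p)) m a b"
    using cyc by (auto simp: alt_cycle_def a_def b_def)
  have ne: "ys \<noteq> []" using len by auto
  have a_ys: "a \<in> set ys" and b_ys: "b \<in> set ys" using ne by (simp_all add: a_def b_def)
  have a_W: "a \<in> W" using a_ys ys_W by auto
  have cases: "(m a = m p \<and> (\<exists>s\<in>S. E s b)) \<or> (b = m p \<and> (\<exists>s\<in>S. E s (m a)))"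
    using contract_alt_step_cases[OF ab] closing by (simp add: a_def b_def)
  have E_path: "successively (alt_step E m) ys" using contract_alt_cycle_path[OF G cyc closing] .
  from cases show ?thesis
  proof
    assume "m a = m p \<and> (\<exists>s\<in>S. E s b)"
    then obtain s where a: "a = p" and s: "s \<in> S" "E s b" using inv a_W p by metis
    obtain zs where zs: "zs \<noteq> []" "hd zs = s" "set zs \<subseteq> S" "mate_free m zs"
      "successively (alt_step E m) (zs @ [m p])" using segs s by blast
    define tail where "tail = rev (map m zs)"
    have "successively (alt_step E m) (rev (map m (zs @ [m p])))"
      using alt_path_rev_map[OF G _ zs(5)] zs p matched_graph_mateD[OF G] by auto
    then have "successively (alt_step E m) (p # tail)" using inv p by (simp add: tail_def)
    moreover have "mate_free m tail"
      using mate_free_rev_map[OF G _ zs(4)] zs p by (auto simp: tail_def)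
    moreover have "last tail = m s" "set tail \<subseteq> S" "tail \<noteq> []"
      using zs p by (auto simp: tail_def last_rev hd_map)
    moreover have "alt_step E m (m s) b" using s inv p b_ys ys_W by (auto simp: alt_step_def)
    ultimately have "alt_cycle W E m (ys @ tail)"
      using E_path mate_free_append[OF G mf ys_W] len ys_W p ne a
      by (auto simp: alt_cycle_def successively_append_iff successively_Cons a_def b_def)
    then show ?thesis by blast
  next
    assume "b = m p \<and> (\<exists>s\<in>S. E s (m a))"
    then obtain s where b: "b = m p" and s: "s \<in> S" "E s (m a)" by blast
    obtain zs where zs: "zs \<noteq> []" "hd zs = s" "set zs \<subseteq> S" "mate_free m zs"
      "successively (alt_step E m) (zs @ [m p])" using segs s by blast
    have "alt_step E m a s"
      using s a_ys ys_W matched_graph_edgeD[OF G] by (auto simp: alt_step_def)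
    then have "alt_cycle W E m (ys @ zs)"
      using E_path zs mate_free_append[OF G mf ys_W zs(4) zs(3) p(3)] len ys_W p ne b
      by (auto simp: alt_cycle_def successively_append_iff a_def b_def)
    then show ?thesis by blast
  qed
qed

lemma contract_alt_cycle_lift:
  assumes G: "matched_graph W E m" and B: "blossom W E m p S"
    and cyc: "alt_cycle (W - S) (contract E S (m p)) m xs"
  shows "\<exists>zs. alt_cycle W E m zs"
proof (cases "successively (alt_step E m) xs")
  case True
  show ?thesis
  proof (cases "alt_step E m (last xs) (hd xs)")
    case True
    then have "alt_cycle W E m xs" using cyc \<open>successively (alt_step E m) xs\<close>
      by (auto simp: alt_cycle_def)
    then show ?thesis by blast
  qed (use contract_alt_cycle_lift_closing[OF G B cyc] in blast)
next
  case False
  then obtain as a b bs where xs: "xs = as @ a # b # bs" and ab: "\<not> alt_step E m a b"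
    using not_successively_split by blast
  then show ?thesis
    using contract_alt_cycle_lift_closing[OF G B alt_cycle_rotate[OF cyc[unfolded xs]]] by simp
qed

lemma contract_matching_bridge_lift:
  assumes G: "matched_graph W E m" and B: "blossom W E m p S"
    and no_edge: "\<forall>s\<in>S. \<not> E p s"
    and bridge: "matching_bridge (W - S) (contract E S (m p)) m x X"
  shows "matching_bridge W E m x (X \<union> (if m p \<in> X then S else {}))"
proof -
  define E' where "E' = contract E S (m p)"
  define Y where "Y = X \<union> (if m p \<in> X then S else {})"
  have inv: "\<And>x. x \<in> W \<Longrightarrow> m (m x) = x" using matched_graph_mateD[OF G] by blast
  have p: "p \<in> W" "S \<subseteq> W" "p \<notin> S" "m p \<notin> S" "\<forall>s\<in>S. m s \<in> S"
    using B by (auto simp: blossom_def)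
  have X: "x \<in> X" "m x \<notin> X" "X \<subseteq> W - S" "\<And>a b. a \<in> X \<Longrightarrow> E' a b \<Longrightarrow> b \<in> X \<or> (a = x \<and> b = m x)"
    using bridge by (auto simp: matching_bridge_def E'_def)
  have mx_S: "m x \<notin> S" using X p inv by (metis Diff_iff subsetD)
  have x_p: "m x = m p \<Longrightarrow> x = p" using inv X p by (metis Diff_iff subsetD)
  have "b \<in> Y \<or> (a = x \<and> b = m x)" if a: "a \<in> Y" and e: "E a b" for a b
  proof (cases "a \<in> S")
    case True
    then have mp_X: "m p \<in> X" using a X(3) by (auto simp: Y_def split: if_splits)
    show ?thesis
    proof (cases "b \<in> S \<or> b = m p")
      case False
      then have "E' (m p) b" using True e p by (auto simp: E'_def contract_def)
      moreover have "b \<noteq> p" using no_edge True e matched_graph_edgeD[OF G] by blast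
      ultimately show ?thesis using X(4)[OF mp_X] inv p by (auto simp: Y_def)
    qed (use mp_X in \<open>auto simp: Y_def\<close>)
  next
    case False
    then have a_X: "a \<in> X" using a by (auto simp: Y_def split: if_splits)
    show ?thesis
    proof (cases "b \<in> S")
      case False
      then have "E' a b" using \<open>a \<notin> S\<close> e by (simp add: E'_def contract_def)
      then show ?thesis using X(4)[OF a_X] by (auto simp: Y_def)
    next
      case True
      show ?thesis
      proof (cases "a = m p")
        case False
        have "E b a" using e matched_graph_edgeD[OF G] by blast
        then have "E' a (m p)"
          using False \<open>a \<notin> S\<close> True p by (auto simp: E'_def contract_def)
        then have "m p \<in> X \<or> (a = x \<and> m p = m x)" using X(4)[OF a_X] by blast
        moreover have "a \<noteq> p" using no_edge True e by blast
        ultimately have "m p \<in> X" using x_p by auto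
        then show ?thesis using True by (simp add: Y_def)
      qed (use a_X True in \<open>auto simp: Y_def\<close>)
    qed
  qed
  then show ?thesis
    using X mx_S p by (auto simp: matching_bridge_def Y_def)
qed

text \<open>Kotzig's theorem: a graph with a unique perfect matching has a bridge in the matching.
  Uniqueness is expressed here by the absence of alternating cycles.\<close>

theorem kotzig:
  assumes "matched_graph W E m" "W \<noteq> {}" "\<nexists>xs. alt_cycle W E m xs"
  shows "\<exists>x X. matching_bridge W E m x X"
  using assms
proof (induction "card W" arbitrary: W E rule: less_induct)
  case less
  note G = less.prems(1) and no_cycle = less.prems(3)
  show ?case
  proof (cases "\<forall>x\<in>W. \<exists>y. alt_step E m x y")
    case False
    then obtain x where x: "x \<in> W" "\<forall>y. \<not> alt_step E m x y" by blast
    then have "matching_bridge W E m (m x) {m x}"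
      using matched_graph_mateD[OF G x(1)] by (auto simp: matching_bridge_def alt_step_def)
    then show ?thesis by blast
  next
    case True
    then obtain p S where B: "blossom W E m p S" using blossom_exists[OF less.prems] by blast
    have "finite W" using G by (simp add: matched_graph_def)
    moreover have "W - S \<subset> W" using B by (auto simp: blossom_def)
    ultimately have "card (W - S) < card W" by (rule psubset_card_mono)
    moreover have "W - S \<noteq> {}" using B by (auto simp: blossom_def)
    moreover have "\<nexists>xs. alt_cycle (W - S) (contract E S (m p)) m xs"
      using contract_alt_cycle_lift[OF G B] no_cycle by blast
    ultimately obtain x X where "matching_bridge (W - S) (contract E S (m p)) m x X"
      using less.hyps[OF _ matched_graph_contract[OF G B]] by blast
    then show ?thesis
      using contract_matching_bridge_lift[OF G B] blossom_base_no_edge[OF G B no_cycle] by blast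
  qed
qed

section \<open>Alternating cycles in two-coloured graphs\<close>

lemma two_coloured_graphD:
  assumes "two_coloured_graph V Rd Bl"
  shows "finite V" "Rd u v \<Longrightarrow> u \<in> V \<and> v \<in> V \<and> u \<noteq> v \<and> Rd v u"
    "Bl u v \<Longrightarrow> u \<in> V \<and> v \<in> V \<and> u \<noteq> v \<and> Bl v u" "\<not> (Rd u v \<and> Bl u v)"
  using assms by (auto simp: two_coloured_graph_def)

text \<open>One copy of \<open>V\<close> per colour (\<open>True\<close> for red), each carrying the edges of its colour,
  and every vertex matched to its copy in the other layer. Alternating cycles of the coloured
  graph are the alternating cycles with respect to this matching.\<close>

definition layered_graph ::
    "'a set \<Rightarrow> ('a \<Rightarrow> 'a \<Rightarrow> bool) \<Rightarrow> ('a \<Rightarrow> 'a \<Rightarrow> bool) \<Rightarrow> 'a \<times> bool \<Rightarrow> 'a \<times> bool \<Rightarrow> bool" where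
  "layered_graph V Rd Bl x y \<longleftrightarrow> fst x \<in> V \<and> fst y \<in> V \<and>
     ((fst x = fst y \<and> snd x \<noteq> snd y) \<or>
      (snd x = snd y \<and> (if snd x then Rd (fst x) (fst y) else Bl (fst x) (fst y))))"

lemma matched_graph_layered:
  assumes "two_coloured_graph V Rd Bl"
  shows "matched_graph (V \<times> UNIV) (layered_graph V Rd Bl) (apsnd Not)"
  using two_coloured_graphD[OF assms]
  unfolding matched_graph_def layered_graph_def by (auto simp: prod_eq_iff split: if_splits)

lemma layered_alt_stepD:
  assumes "alt_step (layered_graph V Rd Bl) (apsnd Not) x y"
  shows "snd y = (\<not> snd x)" "if snd y then Rd (fst x) (fst y) else Bl (fst x) (fst y)"
  using assms unfolding alt_step_def layered_graph_def by (auto simp: prod_eq_iff split: if_splits)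

lemma distinct_map_fst_mate_free:
  assumes "mate_free (apsnd Not) xs"
  shows "distinct (map fst xs)"
proof -
  have "x = y" if "x \<in> set xs" "y \<in> set xs" "fst x = fst y" for x y
  proof (cases "snd x = snd y")
    case False
    then have "y = apsnd Not x" using that(3) by (simp add: prod_eq_iff)
    then show ?thesis using assms that(1,2) by (simp add: mate_free_def)
  qed (simp add: that(3) prod_eq_iff)
  then have "inj_on fst (set xs)" by (rule inj_onI)
  then show ?thesis using assms by (simp add: mate_free_def distinct_map)
qed

text \<open>Consecutive vertices of the cycle lie in alternating layers, and the layer of the
  endpoint of an edge is its colour.\<close>

lemma alternating_cycle_of_layered:
  assumes tc: "two_coloured_graph V Rd Bl"
    and cyc: "alt_cycle (V \<times> UNIV) (layered_graph V Rd Bl) (apsnd Not) xs"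
  shows "set (map fst xs) \<subseteq> V \<and> alternating_cycle Rd Bl (map fst xs)"
proof -
  define k where "k = length xs"
  define v where "v i = fst (xs ! (i mod k))" for i
  define c where "c i = snd (xs ! (i mod k))" for i
  have k: "2 \<le> k" and xs_V: "set xs \<subseteq> V \<times> UNIV" and mf: "mate_free (apsnd Not) xs"
    using cyc by (auto simp: alt_cycle_def k_def)
  have steps: "c (Suc i) = (\<not> c i)" "Rd (v i) (v (Suc i)) = c (Suc i)"
    "Bl (v i) (v (Suc i)) = (\<not> c (Suc i))" for i
  proof -
    have "i mod k < k" "Suc (i mod k) mod k = Suc i mod k" using k by (auto simp: mod_Suc_eq)
    then have "alt_step (layered_graph V Rd Bl) (apsnd Not) (xs ! (i mod k)) (xs ! (Suc i mod k))"
      using successively_cyclic_nth[of "alt_step _ _" xs "i mod k"] cyc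
      by (metis alt_cycle_def k_def)
    from layered_alt_stepD[OF this] two_coloured_graphD(4)[OF tc]
    show "c (Suc i) = (\<not> c i)" "Rd (v i) (v (Suc i)) = c (Suc i)"
      "Bl (v i) (v (Suc i)) = (\<not> c (Suc i))" by (auto simp: v_def c_def split: if_splits)
  qed
  have "k \<noteq> 2"
  proof
    assume "k = 2"
    then have "v 2 = v 0" by (simp add: v_def)
    then show False
      using steps[of 0] steps[of 1] two_coloured_graphD(2,3)[OF tc] by (auto simp: numeral_2_eq_2)
  qed
  have "alternating_cycle Rd Bl (map fst xs)"
    unfolding alternating_cycle_def
  proof (intro conjI allI impI)
    show "3 \<le> length (map fst xs)" using k \<open>k \<noteq> 2\<close> by (simp add: k_def)
    show "distinct (map fst xs)" using distinct_map_fst_mate_free[OF mf] .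
    fix i assume "i < length (map fst xs)"
    moreover have "j mod length xs < length xs" for j
      using k by (intro mod_less_divisor) (auto simp: k_def)
    ultimately have idx: "map fst xs ! i = v i"
      "map fst xs ! ((i + 1) mod length (map fst xs)) = v (Suc i)"
      "map fst xs ! ((i + 2) mod length (map fst xs)) = v (Suc (Suc i))"
      by (simp_all add: v_def k_def)
    show "Rd (map fst xs ! i) (map fst xs ! ((i + 1) mod length (map fst xs))) \<or>
        Bl (map fst xs ! i) (map fst xs ! ((i + 1) mod length (map fst xs)))"
      using idx steps[of i] by simp
    show "Rd (map fst xs ! i) (map fst xs ! ((i + 1) mod length (map fst xs))) \<longleftrightarrow>
        Bl (map fst xs ! ((i + 1) mod length (map fst xs))) (map fst xs ! ((i + 2) mod length (map fst xs)))"
      using idx steps[of i] steps[of "Suc i"] by simp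
  qed
  then show ?thesis using xs_V by auto
qed

definition closed_except :: "('a \<Rightarrow> 'a \<Rightarrow> bool) \<Rightarrow> ('a \<Rightarrow> 'a \<Rightarrow> bool) \<Rightarrow> 'a \<Rightarrow> 'a set \<Rightarrow> bool" where
  "closed_except Rd Bl z C \<longleftrightarrow> (\<forall>v\<in>C. \<forall>u. Rd v u \<or> Bl v u \<longrightarrow> u \<in> C \<or> u = z)"

lemma layered_bridge_same_class:
  assumes bridge: "matching_bridge (V \<times> UNIV) (layered_graph V Rd Bl) (apsnd Not) (z, \<beta>) X"
    and v: "v \<in> V" "v \<noteq> z"
  shows "(v, \<gamma>) \<in> X \<longleftrightarrow> (v, \<beta>) \<in> X"
proof -
  have flip: "(v, \<not> b) \<in> X" if "(v, b) \<in> X" for b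
    using bridge that v unfolding matching_bridge_def layered_graph_def by force
  show ?thesis using flip[of True] flip[of False] by (cases \<gamma>; cases \<beta>) auto
qed

lemma layered_bridge_edge:
  assumes tc: "two_coloured_graph V Rd Bl"
    and bridge: "matching_bridge (V \<times> UNIV) (layered_graph V Rd Bl) (apsnd Not) (z, \<beta>) X"
    and e: "Rd v u \<or> Bl v u" and "v \<noteq> z" "u \<noteq> z" and "(v, \<beta>) \<in> X"
  shows "(u, \<beta>) \<in> X"
proof -
  define \<gamma> where "\<gamma> = Rd v u"
  have vu: "v \<in> V" "u \<in> V" using e two_coloured_graphD[OF tc] by blast+
  have "layered_graph V Rd Bl (v, \<gamma>) (u, \<gamma>)"
    using e vu \<gamma>_def by (auto simp: layered_graph_def)
  moreover have "(v, \<gamma>) \<in> X"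
    using layered_bridge_same_class[OF bridge] vu assms(4,6) by blast
  ultimately have "(u, \<gamma>) \<in> X" using bridge assms(4) by (auto simp: matching_bridge_def)
  then show ?thesis using layered_bridge_same_class[OF bridge] vu assms(5) by blast
qed

text \<open>The cut vertex \<open>z\<close> is the vertex of the bridge; \<open>C\<^sub>1\<close> and \<open>C\<^sub>2\<close> are the vertices
  on either side of it.\<close>

lemma no_alternating_cycle_cut_vertex:
  assumes tc: "two_coloured_graph V Rd Bl" and "V \<noteq> {}"
    and no_cycle: "\<nexists>c. set c \<subseteq> V \<and> alternating_cycle Rd Bl c"
    and both_colours: "\<forall>v\<in>V. (\<exists>u. Rd v u) \<and> (\<exists>u. Bl v u)"
  obtains z C\<^sub>1 C\<^sub>2 where "z \<in> V" "C\<^sub>1 \<subseteq> V - {z}" "C\<^sub>2 \<subseteq> V - {z}" "C\<^sub>1 \<inter> C\<^sub>2 = {}"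
    "C\<^sub>1 \<noteq> {}" "C\<^sub>2 \<noteq> {}" "closed_except Rd Bl z C\<^sub>1" "closed_except Rd Bl z C\<^sub>2"
proof -
  let ?H = "layered_graph V Rd Bl"
  have "\<nexists>xs. alt_cycle (V \<times> UNIV) ?H (apsnd Not) xs"
    using alternating_cycle_of_layered[OF tc] no_cycle by blast
  then obtain x X where "matching_bridge (V \<times> UNIV) ?H (apsnd Not) x X"
    using kotzig[OF matched_graph_layered[OF tc]] \<open>V \<noteq> {}\<close> by blast
  moreover obtain z \<beta> where x: "x = (z, \<beta>)" by fastforce
  ultimately have bridge: "matching_bridge (V \<times> UNIV) ?H (apsnd Not) (z, \<beta>) X" by simp
  then have z: "z \<in> V" "(z, \<beta>) \<in> X" "(z, \<not> \<beta>) \<notin> X"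
    by (auto simp: matching_bridge_def)
  note edge = layered_bridge_edge[OF tc bridge]
  define C\<^sub>1 where "C\<^sub>1 = {v \<in> V - {z}. (v, \<beta>) \<in> X}"
  define C\<^sub>2 where "C\<^sub>2 = {v \<in> V - {z}. (v, \<beta>) \<notin> X}"
  have "closed_except Rd Bl z C\<^sub>1"
    using edge two_coloured_graphD[OF tc] by (auto simp: closed_except_def C\<^sub>1_def)
  moreover have "closed_except Rd Bl z C\<^sub>2"
    using edge two_coloured_graphD[OF tc] by (auto simp: closed_except_def C\<^sub>2_def) blast+
  moreover have "C\<^sub>1 \<noteq> {}"
  proof -
    obtain w where w: "if \<beta> then Rd z w else Bl z w" using both_colours z by (cases \<beta>) auto
    then have "w \<in> V" "w \<noteq> z" using two_coloured_graphD[OF tc] by (auto split: if_splits)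
    moreover have "?H (z, \<beta>) (w, \<beta>)" using w calculation z by (auto simp: layered_graph_def)
    then have "(w, \<beta>) \<in> X" using bridge by (auto simp: matching_bridge_def)
    ultimately show ?thesis by (auto simp: C\<^sub>1_def)
  qed
  moreover have "C\<^sub>2 \<noteq> {}"
  proof -
    obtain w where w: "if \<beta> then Bl z w else Rd z w" using both_colours z by (cases \<beta>) auto
    then have w_V: "w \<in> V" "w \<noteq> z" using two_coloured_graphD[OF tc] by (auto split: if_splits)
    have "(w, \<beta>) \<notin> X"
    proof
      assume "(w, \<beta>) \<in> X"
      then have "(w, \<not> \<beta>) \<in> X" using layered_bridge_same_class[OF bridge] w_V by blast
      moreover have "?H (w, \<not> \<beta>) (z, \<not> \<beta>)"
        using w w_V z two_coloured_graphD[OF tc] by (auto simp: layered_graph_def split: if_splits)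
      ultimately have "(z, \<not> \<beta>) \<in> X" using bridge w_V by (auto simp: matching_bridge_def)
      then show False using z by simp
    qed
    then show ?thesis using w_V by (auto simp: C\<^sub>2_def)
  qed
  moreover have "C\<^sub>1 \<subseteq> V - {z}" "C\<^sub>2 \<subseteq> V - {z}" "C\<^sub>1 \<inter> C\<^sub>2 = {}"
    by (auto simp: C\<^sub>1_def C\<^sub>2_def)
  ultimately show ?thesis using that[OF z(1)] by blast
qed

definition induced :: "'a set \<Rightarrow> ('a \<Rightarrow> 'a \<Rightarrow> bool) \<Rightarrow> 'a \<Rightarrow> 'a \<Rightarrow> bool" where
  "induced C R u w \<longleftrightarrow> R u w \<and> u \<in> C \<and> w \<in> C"

lemma two_coloured_graph_induced:
  "two_coloured_graph V Rd Bl \<Longrightarrow> C \<subseteq> V \<Longrightarrow> two_coloured_graph C (induced C Rd) (induced C Bl)"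
  by (auto simp: two_coloured_graph_def induced_def finite_subset)

lemma alternating_cycle_induced:
  assumes "alternating_cycle (induced C Rd) (induced C Bl) c" "set c \<subseteq> C"
  shows "alternating_cycle Rd Bl c"
proof -
  have "0 < length c" using assms(1) by (auto simp: alternating_cycle_def)
  then have "c ! (j mod length c) \<in> C" for j using assms(2) nth_mem[of "j mod length c" c] by auto
  then show ?thesis
    using assms(1) unfolding alternating_cycle_def induced_def by (metis mod_less)
qed

lemma card_neighbours_induced:
  assumes "finite C" "v \<in> C" "\<forall>u. R v u \<longrightarrow> u \<in> C \<or> u = z"
  shows "card {u \<in> V. R v u} \<le> Suc (card {u \<in> C. induced C R v u})"
proof -
  have "card {u \<in> V. R v u} \<le> card (insert z {u \<in> C. induced C R v u})"
    using assms by (intro card_mono) (auto simp: induced_def)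
  also have "\<dots> \<le> Suc (card {u \<in> C. induced C R v u})"
    using assms(1) by (simp add: card_insert_if)
  finally show ?thesis .
qed

lemma min_degree_induced:
  assumes tc: "two_coloured_graph V Rd Bl" and "C \<subseteq> V" "closed_except Rd Bl z C"
    and deg: "\<forall>v\<in>V. Suc d \<le> red_deg V Rd v \<and> Suc d \<le> blue_deg V Bl v"
  shows "\<forall>v\<in>C. d \<le> red_deg C (induced C Rd) v \<and> d \<le> blue_deg C (induced C Bl) v"
proof
  fix v assume v: "v \<in> C"
  have "finite C" using two_coloured_graphD(1)[OF tc] assms(2) finite_subset by blast
  then have "card {u \<in> V. Rd v u} \<le> Suc (card {u \<in> C. induced C Rd v u})"
    "card {u \<in> V. Bl v u} \<le> Suc (card {u \<in> C. induced C Bl v u})"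
    using v assms(3) by (auto simp: closed_except_def intro: card_neighbours_induced)
  then show "d \<le> red_deg C (induced C Rd) v \<and> d \<le> blue_deg C (induced C Bl) v"
    using deg v assms(2) by (force simp: red_deg_def blue_deg_def)
qed

lemma card_ge_if_no_alternating_cycle:
  assumes "two_coloured_graph V Rd Bl" "V \<noteq> {}"
    and "\<forall>v\<in>V. d \<le> red_deg V Rd v \<and> d \<le> blue_deg V Bl v"
    and "\<nexists>c. set c \<subseteq> V \<and> alternating_cycle Rd Bl c"
  shows "2 ^ Suc d \<le> Suc (card V)"
  using assms
proof (induction d arbitrary: V Rd Bl)
  case 0
  then show ?case using card_0_eq[of V] two_coloured_graphD(1) by fastforce
next
  case (Suc d)
  note tc = Suc.prems(1) and deg = Suc.prems(3) and no_cycle = Suc.prems(4)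
  have "\<exists>u. u \<in> A" if "Suc d \<le> card A" for A :: "'a set"
    using that by (cases "A = {}") auto
  then have "\<forall>v\<in>V. (\<exists>u. Rd v u) \<and> (\<exists>u. Bl v u)"
    using deg unfolding red_deg_def blue_deg_def by blast
  then obtain z C\<^sub>1 C\<^sub>2 where C: "z \<in> V" "C\<^sub>1 \<subseteq> V - {z}" "C\<^sub>2 \<subseteq> V - {z}" "C\<^sub>1 \<inter> C\<^sub>2 = {}"
    "C\<^sub>1 \<noteq> {}" "C\<^sub>2 \<noteq> {}" "closed_except Rd Bl z C\<^sub>1" "closed_except Rd Bl z C\<^sub>2"
    using no_alternating_cycle_cut_vertex[OF tc Suc.prems(2) no_cycle] by blast
  have IH: "2 ^ Suc d \<le> Suc (card C)" if "C \<subseteq> V - {z}" "C \<noteq> {}" "closed_except Rd Bl z C" for C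
    using Suc.IH[OF two_coloured_graph_induced[OF tc] that(2) min_degree_induced[OF tc _ that(3) deg]]
      alternating_cycle_induced no_cycle that(1) by blast
  have "finite V" using two_coloured_graphD(1)[OF tc] .
  then have "finite C\<^sub>1" "finite C\<^sub>2" using C(2,3) finite_subset by blast+
  moreover have "z \<notin> C\<^sub>1 \<union> C\<^sub>2" using C(2,3) by blast
  ultimately have "card C\<^sub>1 + card C\<^sub>2 + 1 = card (insert z (C\<^sub>1 \<union> C\<^sub>2))"
    using C(4) by (simp add: card_Un_disjoint)
  also have "\<dots> \<le> card V" using C(1-3) \<open>finite V\<close> by (intro card_mono) auto
  finally have "card C\<^sub>1 + card C\<^sub>2 + 1 \<le> card V" .
  then show ?case using IH[OF C(2,5,7)] IH[OF C(3,6,8)] by simp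
qed

theorem corollary2p2:
  fixes V :: "'a set" and Rd Bl :: "'a \<Rightarrow> 'a \<Rightarrow> bool"
  assumes "two_coloured_graph V Rd Bl"
    and "card V \<ge> 2"
    and "\<forall>v\<in>V. real (red_deg V Rd v) \<ge> log 2 (real (card V))"
    and "\<forall>v\<in>V. real (blue_deg V Bl v) \<ge> log 2 (real (card V))"
  shows "\<exists>c. set c \<subseteq> V \<and> alternating_cycle Rd Bl c"
proof (rule ccontr)
  assume no_cycle: "\<nexists>c. set c \<subseteq> V \<and> alternating_cycle Rd Bl c"
  define n where "n = card V"
  define d where "d = nat \<lceil>log 2 (real n)\<rceil>"
  have "2 \<le> n" using assms(2) by (simp add: n_def)
  then have "V \<noteq> {}" by (auto simp: n_def)
  have "\<forall>v\<in>V. d \<le> red_deg V Rd v \<and> d \<le> blue_deg V Bl v"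
    using assms(3,4) by (auto simp: d_def n_def nat_le_iff ceiling_le_iff)
  then have "2 ^ Suc d \<le> Suc n"
    using card_ge_if_no_alternating_cycle[OF assms(1) \<open>V \<noteq> {}\<close> _ no_cycle] by (simp add: n_def)
  moreover have "real n \<le> 2 ^ d"
  proof -
    have "real n = 2 powr log 2 (real n)" using \<open>2 \<le> n\<close> by simp
    also have "\<dots> \<le> 2 powr real d" by (intro powr_mono) (auto simp: d_def real_nat_ceiling_ge)
    finally show ?thesis by (simp add: powr_realpow)
  qed
  then have "n \<le> 2 ^ d" by (metis of_nat_le_iff of_nat_numeral of_nat_power)
  ultimately show False using \<open>2 \<le> n\<close> by simp
qed

end
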